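(* For $\alpha=2$ and $\beta=3$ (so $\alpha>0$, $\beta>\alpha$), the Sharma-Mittal entropy $S_{2,3}(\mathbf{p})=\frac12\left(1-\left(\sum_i p_i^2\right)^2\right)$ is neither supermodular nor submodular on the majorization lattice $(\mathcal{P}_4,\preceq)$: there exist $\mathbf{p},\mathbf{q}\in\mathcal{P}_4$ with $S_{2,3}(\mathbf{p}\vee\mathbf{q})+S_{2,3}(\mathbf{p}\wedge\mathbf{q})<S_{2,3}(\mathbf{p})+S_{2,3}(\mathbf{q})$, and there exist $\mathbf{p}',\mathbf{q}'\in\mathcal{P}_4$ with $S_{2,3}(\mathbf{p}'\vee\mathbf{q}')+S_{2,3}(\mathbf{p}'\wedge\mathbf{q}')>S_{2,3}(\mathbf{p}')+S_{2,3}(\mathbf{q}')$.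
   Context: $\mathcal{P}_4$ is the set of probability vectors of length 4, taken with components in non-increasing order. Majorization: $\mathbf{p}\preceq\mathbf{q}$ iff $\sum_{i=1}^k p_i\le\sum_{i=1}^k q_i$ for $k=1,\dots,4$; this makes $\mathcal{P}_4$ a lattice. The greatest lower bound $\mathbf{p}\wedge\mathbf{q}=\mathbf{r}$ satisfies $\sum_{i=1}^k r_i=\min\{\sum_{i=1}^k p_i,\sum_{i=1}^k q_i\}$. The least upper bound $\mathbf{p}\vee\mathbf{q}$ is the least element majorizing both; concretely, let $\mathbf{w}$ satisfy $\sum_{i=1}^k w_i=\max\{\sum_{i=1}^k p_i,\sum_{i=1}^k q_i\}$; if $\mathbf{w}$ is non-increasing then $\mathbf{p}\vee\mathbf{q}=\mathbf{w}$, otherwise it is obtained by repeatedly replacing each maximal consecutive block of coordinates violating the non-increasing order by its average. A function $\phi$ is supermodular if $\phi(\mathbf{x})+\phi(\mathbf{y})\le\phi(\mathbf{x}\wedge\mathbf{y})+\phi(\mathbf{x}\vee\mathbf{y})$ for all $\mathbf{x},\mathbf{y}$, and submodular if the reverse inequality holds for all $\mathbf{x},\mathbf{y}$. The Sharma-Mittal entropy is $S_{\alpha,\beta}(\mathbf{p})=\frac{1}{1-\beta}\left[\left(\sum_{i} p_i^\alpha\right)^{\frac{1-\beta}{1-\alpha}}-1\right]$. *)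

theory Defs
  imports Complex_Main
begin

definition prob4 :: "real list \<Rightarrow> bool" where
  "prob4 p \<longleftrightarrow> length p = 4 \<and> (\<forall>x\<in>set p. 0 \<le> x) \<and> sum_list p = 1
      \<and> sorted_wrt (\<lambda>x y. x \<ge> y) p"

definition psum :: "real list \<Rightarrow> nat \<Rightarrow> real" where
  "psum p k = sum_list (take k p)"

definition majorized :: "real list \<Rightarrow> real list \<Rightarrow> bool" where
  "majorized p q \<longleftrightarrow> (\<forall>k\<in>{1..4}. psum p k \<le> psum q k)"

definition meet4 :: "real list \<Rightarrow> real list \<Rightarrow> real list" where
  "meet4 p q = map (\<lambda>k. min (psum p (Suc k)) (psum q (Suc k)) - min (psum p k) (psum q k)) [0..<4]"

definition join4 :: "real list \<Rightarrow> real list \<Rightarrow> real list" where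
  "join4 p q = (THE r. prob4 r \<and> majorized p r \<and> majorized q r \<and>
      (\<forall>s. prob4 s \<and> majorized p s \<and> majorized q s \<longrightarrow> majorized r s))"

definition sharma_mittal :: "real \<Rightarrow> real \<Rightarrow> real list \<Rightarrow> real" where
  "sharma_mittal \<alpha> \<beta> p =
     (1 / (1 - \<beta>)) * ((sum_list (map (\<lambda>x. x powr \<alpha>) p)) powr ((1 - \<beta>) / (1 - \<alpha>)) - 1)"

end

theory Submission
  imports Defs
begin

text \<open>With \<open>P = \<Sum>i p\<^sub>i\<^sup>2\<close> the collision probability, \<open>S\<^sub>2\<^sub>,\<^sub>3(p) = (1 - P\<^sup>2) / 2\<close>,
  so both claims reduce to comparing \<open>P(p)\<^sup>2 + P(q)\<^sup>2\<close> with \<open>P(p \<or> q)\<^sup>2 + P(p \<and> q)\<^sup>2\<close>.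
  The witnesses \<open>p = (2/5, 2/5, 1/5, 0)\<close>, \<open>q = (1/2, 3/10, 1/10, 1/10)\<close> and
  \<open>p' = (2/5, 3/10, 3/10, 0)\<close>, \<open>q' = (2/5, 2/5, 1/10, 1/10)\<close> are chosen so that the pointwise
  maxima of the partial sums are already non-increasing; hence no averaging is needed and the
  join is read off directly from those maxima.\<close>

lemma length_4_obtain:
  assumes "length r = 4"
  obtains a b c d where "r = [a, b, c, d]"
  using assms by (auto simp: numeral_eq_Suc length_Suc_conv)

lemma psum_4 [simp]:
  "psum [a, b, c, d] (Suc 0) = a" "psum [a, b, c, d] 2 = a + b" "psum [a, b, c, d] 3 = a + b + c"
  "psum [a, b, c, d] 4 = a + b + c + d"
  by (simp_all add: psum_def numeral_eq_Suc)

lemma ball_atLeastAtMost_1_4: "(\<forall>k\<in>{1..4::nat}. P k) \<longleftrightarrow> P 1 \<and> P 2 \<and> P 3 \<and> P 4"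
proof -
  have "{1..4::nat} = {1, 2, 3, 4}" by auto
  then show ?thesis by simp
qed

lemma majorized_4_iff:
  "majorized [a, b, c, d] [a', b', c', d'] \<longleftrightarrow>
     a \<le> a' \<and> a + b \<le> a' + b' \<and> a + b + c \<le> a' + b' + c' \<and> a + b + c + d \<le> a' + b' + c' + d'"
  unfolding majorized_def ball_atLeastAtMost_1_4 by simp

lemma join4_eqI:
  assumes w: "prob4 w" and max_psum: "\<And>k. k \<in> {1..4} \<Longrightarrow> psum w k = max (psum p k) (psum q k)"
  shows "join4 p q = w"
  unfolding join4_def
proof (rule the_equality)
  show "prob4 w \<and> majorized p w \<and> majorized q w \<and>
      (\<forall>s. prob4 s \<and> majorized p s \<and> majorized q s \<longrightarrow> majorized w s)"
    using w max_psum by (auto simp: majorized_def)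
next
  fix r assume r: "prob4 r \<and> majorized p r \<and> majorized q r \<and>
      (\<forall>s. prob4 s \<and> majorized p s \<and> majorized q s \<longrightarrow> majorized r s)"
  have "majorized r w"
    using r w max_psum by (auto simp: majorized_def)
  moreover have "majorized w r"
    using r max_psum by (auto simp: majorized_def)
  moreover obtain a b c d where "r = [a, b, c, d]"
    using r length_4_obtain unfolding prob4_def by blast
  moreover obtain a' b' c' d' where "w = [a', b', c', d']"
    using w length_4_obtain unfolding prob4_def by blast
  ultimately show "r = w" by (auto simp: majorized_4_iff)
qed

lemma join4_4_eqI:
  assumes "prob4 [a, b, c, d]"
    and "a = max a\<^sub>1 a\<^sub>2" "a + b = max (a\<^sub>1 + b\<^sub>1) (a\<^sub>2 + b\<^sub>2)"
    and "a + b + c = max (a\<^sub>1 + b\<^sub>1 + c\<^sub>1) (a\<^sub>2 + b\<^sub>2 + c\<^sub>2)"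
    and "a + b + c + d = max (a\<^sub>1 + b\<^sub>1 + c\<^sub>1 + d\<^sub>1) (a\<^sub>2 + b\<^sub>2 + c\<^sub>2 + d\<^sub>2)"
  shows "join4 [a\<^sub>1, b\<^sub>1, c\<^sub>1, d\<^sub>1] [a\<^sub>2, b\<^sub>2, c\<^sub>2, d\<^sub>2] = [a, b, c, d]"
proof (rule join4_eqI)
  fix k :: nat
  assume "k \<in> {1..4}"
  then consider "k = 1" | "k = 2" | "k = 3" | "k = 4" by fastforce
  then show "psum [a, b, c, d] k = max (psum [a\<^sub>1, b\<^sub>1, c\<^sub>1, d\<^sub>1] k) (psum [a\<^sub>2, b\<^sub>2, c\<^sub>2, d\<^sub>2] k)"
    using assms(2-) by cases simp_all
qed (fact assms(1))

lemma meet4_4: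
  "meet4 [a, b, c, d] [a', b', c', d'] =
    [min a a', min (a + b) (a' + b') - min a a', min (a + b + c) (a' + b' + c') - min (a + b) (a' + b'),
     min (a + b + c + d) (a' + b' + c' + d') - min (a + b + c) (a' + b' + c')]"
  by (simp add: meet4_def psum_def numeral_eq_Suc upt_rec ac_simps)

lemma sharma_mittal_2_3:
  assumes "\<forall>x\<in>set p. 0 \<le> x"
  shows "sharma_mittal 2 3 p = (1 - (\<Sum>x\<leftarrow>p. x\<^sup>2)\<^sup>2) / 2"
proof -
  have "(\<Sum>x\<leftarrow>p. x powr 2) = (\<Sum>x\<leftarrow>p. x\<^sup>2)"
    using assms by (intro arg_cong[where f = sum_list] map_cong) (auto simp: powr_numeral)
  moreover have "0 \<le> (\<Sum>x\<leftarrow>p. x\<^sup>2)"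
    by (rule sum_list_nonneg) auto
  then have "(\<Sum>x\<leftarrow>p. x\<^sup>2) powr ((1 - 3) / (1 - 2)) = (\<Sum>x\<leftarrow>p. x\<^sup>2)\<^sup>2"
    by simp
  ultimately show ?thesis
    unfolding sharma_mittal_def by (simp add: field_simps)
qed

theorem mainTheorem7:
  shows "(\<exists>p q. prob4 p \<and> prob4 q \<and>
            sharma_mittal 2 3 (join4 p q) + sharma_mittal 2 3 (meet4 p q)
              < sharma_mittal 2 3 p + sharma_mittal 2 3 q)
       \<and> (\<exists>p' q'. prob4 p' \<and> prob4 q' \<and>
            sharma_mittal 2 3 (join4 p' q') + sharma_mittal 2 3 (meet4 p' q')
              > sharma_mittal 2 3 p' + sharma_mittal 2 3 q')"
proof
  let ?p = "[2/5, 2/5, 1/5, 0::real]" and ?q = "[1/2, 3/10, 1/10, 1/10::real]"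
  have join: "join4 ?p ?q = [1/2, 3/10, 1/5, 0]"
    by (rule join4_4_eqI) (simp_all add: prob4_def)
  show "\<exists>p q. prob4 p \<and> prob4 q \<and>
      sharma_mittal 2 3 (join4 p q) + sharma_mittal 2 3 (meet4 p q)
        < sharma_mittal 2 3 p + sharma_mittal 2 3 q"
    by (rule exI[of _ ?p], rule exI[of _ ?q]) (simp add: join prob4_def meet4_4 sharma_mittal_2_3 power2_eq_square)
next
  let ?p = "[2/5, 3/10, 3/10, 0::real]" and ?q = "[2/5, 2/5, 1/10, 1/10::real]"
  have join: "join4 ?p ?q = [2/5, 2/5, 1/5, 0]"
    by (rule join4_4_eqI) (simp_all add: prob4_def)
  show "\<exists>p q. prob4 p \<and> prob4 q \<and>
      sharma_mittal 2 3 (join4 p q) + sharma_mittal 2 3 (meet4 p q)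
        > sharma_mittal 2 3 p + sharma_mittal 2 3 q"
    by (rule exI[of _ ?p], rule exI[of _ ?q]) (simp add: join prob4_def meet4_4 sharma_mittal_2_3 power2_eq_square)
qed

end
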